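(* Suppose the standing assumption and Assumption (B) hold. For $c=(c_1,\dots,c_I)$ near $0$ let $f_0(x) = A\exp(\kappa x + \zeta x^2 + \sum_{i=1}^I a_i K_i(x))$, where $(A,\kappa,\zeta,a_1,\dots,a_I)$ are the parameters (depending on $c$) such that $f_0$ is a probability density with mean $0$, variance $1$ and $\int f_0 K_i = c_i$ for all $i$, namely the continuously differentiable solution branch with $(A,\kappa,\zeta,a)\to(1/\sqrt{2\pi},0,-1/2,0)$ as $c\to 0$. Let $\hat f_0(x) := \varphi(x)\bigl(1+\sum_{i=1}^I c_iK_i(x)\bigr)$. Then for every $\delta<1/2$, $$\sup_{x\in\mathbb{R}}\bigl|e^{\delta x^2}\bigl(f_0(x) - \hat f_0(x)\bigr)\bigr| = \mathcal{O}(\|c\|^2)\quad\text{as } c\to 0.$$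
   Context: $\varphi$ denotes the standard normal density. Standing assumption: $G_1,\dots,G_I:\mathbb{R}\to\mathbb{R}$ grow no faster than quadratically (so there are constants $B_i>0$ with $|K_i(x)|\le B_i(1+x^2)$), and $K_i(x) := (G_i(x) + \alpha_i x^2 + \beta_i x + \gamma_i)/\delta_i$ with real constants chosen such that $\int K_i K_j \varphi\,dx = \mathbb{1}_{\{i=j\}}$ and $\int K_i(x) x^k\varphi(x)\,dx = 0$ for $k=0,1,2$ and all $i,j$. Assumption (B): writing $K(x) = (K_1(x),\dots,K_I(x))$, there is $\varepsilon>0$ such that $h^\top K(x)\ge -1/2$ for all $x\in\mathbb{R}$ and all $h\in\mathbb{R}^I$ with $h^\top h<\varepsilon$; and there is $M:\mathbb{R}\to\mathbb{R}$ with $\sum_{i,j,k=1}^I|K_i(x)K_j(x)K_k(x)|\le M(x)$ for all $x$ and $\tilde M := \int\varphi(x) M(x)\,dx<\infty$. $\|\cdot\|$ is the Euclidean norm. *)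

theory Defs
  imports "HOL-Probability.Probability"
begin

definition expfam ::
  "real \<Rightarrow> real \<Rightarrow> real \<Rightarrow> real^'i::finite \<Rightarrow> ('i \<Rightarrow> real \<Rightarrow> real) \<Rightarrow> real \<Rightarrow> real" where
  "expfam A \<kappa> \<zeta> a K x = A * exp (\<kappa> * x + \<zeta> * x\<^sup>2 + (\<Sum>i\<in>UNIV. a $ i * K i x))"

definition expfam_lin :: "real^'i::finite \<Rightarrow> ('i \<Rightarrow> real \<Rightarrow> real) \<Rightarrow> real \<Rightarrow> real" where
  "expfam_lin c K x = std_normal_density x * (1 + (\<Sum>i\<in>UNIV. c $ i * K i x))"

end

theory Submission
  imports Defs
begin

text \<open>
  Write the density as \<open>f\<^sub>0 = \<phi> (1 + s) exp v\<close> with \<open>s = A sqrt(2 pi) - 1\<close> and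
  \<open>v x = \<kappa> x + (\<zeta> + 1/2) x\<^sup>2 + \<Sum>\<^sub>i a\<^sub>i K\<^sub>i x\<close>, and let \<open>\<rho>\<close> be the distance of the parameters from
  those of \<open>\<phi>\<close>. The first half of Assumption (B) forces every \<open>K\<^sub>i\<close> to be bounded by some \<open>L\<close>, so
  \<open>v = O(\<rho> (1 + x\<^sup>2))\<close> and the remainder \<open>(1 + s) exp v - 1 - s - v\<close> is
  \<open>O(\<rho>\<^sup>2 (1 + x\<^sup>2)\<^sup>2 exp (\<eta> (1 + x\<^sup>2)))\<close> for any \<open>\<eta> \<ge> \<rho> L\<close>. Testing the moment conditions
  against \<open>1, x, x\<^sup>2, K\<^sub>j\<close> and using the Gaussian moments and the orthogonality relations,
  the linear parts give \<open>s, \<kappa>, \<zeta> + 1/2, a - c = O(\<rho>\<^sup>2)\<close>. Hence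
  \<open>f\<^sub>0 - \<phi> (1 + \<Sum>\<^sub>i c\<^sub>i K\<^sub>i) = \<phi> O(\<rho>\<^sup>2) (1 + x\<^sup>2)\<^sup>2 exp (\<eta> x\<^sup>2)\<close>, and \<open>exp (\<delta> x\<^sup>2)\<close> times this
  is bounded as soon as \<open>\<delta> + 2 \<eta> \<le> 1/2\<close>. Finally \<open>\<rho> = O(\<parallel>c\<parallel>)\<close> because the parameter map is
  differentiable at \<open>0\<close>.
\<close>

lemma abs_exp_minus_one_minus_le:
  fixes v :: real
  shows "\<bar>exp v - 1 - v\<bar> \<le> v\<^sup>2 * exp \<bar>v\<bar> / 2"
proof -
  obtain t where t: "\<bar>t\<bar> \<le> \<bar>v\<bar>" "exp v = (\<Sum>m<2. v ^ m / fact m) + exp t / fact 2 * v ^ 2"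
    using Maclaurin_exp_le[of v 2] by blast
  then have "\<bar>exp v - 1 - v\<bar> = exp t * v\<^sup>2 / 2"
    by (simp add: numeral_2_eq_2)
  also have "\<dots> \<le> exp \<bar>v\<bar> * v\<^sup>2 / 2"
    using t(1) by (intro divide_right_mono mult_right_mono) auto
  finally show ?thesis
    by (simp add: mult.commute)
qed

lemma abs_le_one_plus_square: "\<bar>x\<bar> \<le> 1 + x\<^sup>2" for x :: real
proof (cases "\<bar>x\<bar> \<le> 1")
  case False
  then have "\<bar>x\<bar> * 1 \<le> \<bar>x\<bar> * \<bar>x\<bar>"
    by (intro mult_left_mono) auto
  then show ?thesis
    using abs_mult_self_eq[of x] by (simp add: power2_eq_square)
qed (simp add: add_increasing2)

lemma one_plus_square_power_le_exp:
  fixes x b :: real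
  assumes "b > 0"
  shows "(1 + x\<^sup>2) ^ n \<le> max 1 (n / b) ^ n * exp (b * x\<^sup>2)"
proof (cases "n = 0")
  case False
  let ?m = "max 1 (n / b)"
  have "?m * (b / n) \<ge> 1"
    using assms False by (auto simp: field_simps max_def)
  then have "1 * x\<^sup>2 \<le> (?m * (b / n)) * x\<^sup>2"
    by (intro mult_right_mono) auto
  then have "1 + x\<^sup>2 \<le> ?m * (1 + b * x\<^sup>2 / n)"
    by (simp add: algebra_simps)
  then have "(1 + x\<^sup>2) ^ n \<le> (?m * (1 + b * x\<^sup>2 / n)) ^ n"
    by (intro power_mono) auto
  also have "\<dots> = ?m ^ n * (1 + b * x\<^sup>2 / n) ^ n"
    by (simp add: power_mult_distrib)
  also have "(1 + b * x\<^sup>2 / n) ^ n \<le> exp (b * x\<^sup>2 / n) ^ n"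
    using assms by (intro power_mono) auto
  also have "exp (b * x\<^sup>2 / n) ^ n = exp (b * x\<^sup>2)"
    using False by (simp add: exp_of_nat_mult[symmetric])
  finally show ?thesis
    by (simp add: mult_left_mono)
qed (use assms in simp)

lemma abs_linearised_exp_le:
  fixes s v r :: real
  assumes "\<bar>v\<bar> \<le> r" and "\<bar>s\<bar> \<le> r" and "\<bar>s\<bar> \<le> 1"
  shows "\<bar>(1 + s) * exp v - 1 - s - v\<bar> \<le> 2 * r\<^sup>2 * exp r"
proof -
  have "r \<ge> 0"
    using assms by linarith
  have "v\<^sup>2 \<le> r\<^sup>2"
    using assms by (metis abs_ge_zero power_mono power2_abs)
  moreover have "exp \<bar>v\<bar> \<le> exp r"
    using assms by simp
  ultimately have "\<bar>exp v - 1 - v\<bar> \<le> r\<^sup>2 * exp r / 2"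
    using abs_exp_minus_one_minus_le[of v] mult_mono[of "v\<^sup>2" "r\<^sup>2" "exp \<bar>v\<bar>" "exp r"] by force
  moreover have "\<bar>1 + s\<bar> * \<bar>exp v - 1 - v\<bar> \<le> 2 * \<bar>exp v - 1 - v\<bar>"
    using assms by (intro mult_right_mono) auto
  moreover have "\<bar>s\<bar> * \<bar>v\<bar> \<le> r\<^sup>2 * exp r"
  proof -
    have "\<bar>s\<bar> * \<bar>v\<bar> \<le> r\<^sup>2 * 1"
      using assms \<open>r \<ge> 0\<close> by (simp add: power2_eq_square mult_mono)
    also have "\<dots> \<le> r\<^sup>2 * exp r"
      using \<open>r \<ge> 0\<close> by (intro mult_left_mono) auto
    finally show ?thesis .
  qed
  moreover have "\<bar>(1 + s) * exp v - 1 - s - v\<bar> = \<bar>(1 + s) * (exp v - 1 - v) + s * v\<bar>"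
    by (rule arg_cong[where f=abs]) (simp add: algebra_simps)
  moreover have "\<dots> \<le> \<bar>1 + s\<bar> * \<bar>exp v - 1 - v\<bar> + \<bar>s\<bar> * \<bar>v\<bar>"
    by (metis abs_mult abs_triangle_ineq)
  ultimately show ?thesis
    by linarith
qed

lemma norm_le_of_inner_bounded_below:
  fixes v :: "'a::real_inner"
  assumes "\<epsilon> > 0" and inner_ge: "\<And>h. h \<bullet> h < \<epsilon> \<Longrightarrow> h \<bullet> v \<ge> - 1/2"
  shows "norm v \<le> 1 / sqrt \<epsilon>"
proof (cases "v = 0")
  case False
  define h where "h = - (sqrt \<epsilon> / (2 * norm v)) *\<^sub>R v"
  have "h \<bullet> h = \<epsilon> / 4"
    using assms False by (simp add: h_def power_divide power_mult_distrib flip: power2_norm_eq_inner)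
  then have "- (sqrt \<epsilon> / 2) * norm v \<ge> - 1/2"
    using assms inner_ge[of h] False by (simp add: h_def power2_norm_eq_inner[symmetric] power2_eq_square)
  then show ?thesis
    using assms by (simp add: field_simps)
qed (use assms in simp)

lemma abs_component_le_of_combinations_bounded_below:
  fixes K :: "'i::finite \<Rightarrow> real \<Rightarrow> real"
  assumes "\<epsilon> > 0" and "\<And>h::real^'i. h \<bullet> h < \<epsilon> \<Longrightarrow> (\<Sum>i\<in>UNIV. h $ i * K i x) \<ge> - 1/2"
  shows "\<bar>K i x\<bar> \<le> 1 / sqrt \<epsilon>"
proof -
  have "norm (\<chi> j. K j x) \<le> 1 / sqrt \<epsilon>"
    using assms by (intro norm_le_of_inner_bounded_below) (auto simp: inner_vec_def)
  then show ?thesis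
    using component_le_norm_cart[of "\<chi> j. K j x" i] by simp
qed

lemma has_derivative_imp_eventually_lipschitz:
  assumes "(f has_derivative f') (at x)"
  obtains M where "M \<ge> 0" and "\<forall>\<^sub>F y in at x. norm (f y - f x) \<le> M * norm (y - x)"
proof -
  obtain B where "B > 0" and B: "\<And>h. norm (f' h) \<le> norm h * B"
    using bounded_linear.pos_bounded[OF has_derivative_bounded_linear[OF assms]] by blast
  have "\<forall>\<^sub>F y in at x. norm (f y - f x - f' (y - x)) \<le> 1 * norm (y - x)"
    using assms unfolding has_derivative_within_alt2 by (auto elim: allE[of _ 1])
  then have "\<forall>\<^sub>F y in at x. norm (f y - f x) \<le> (1 + B) * norm (y - x)"
  proof (rule eventually_mono)
    fix y
    assume "norm (f y - f x - f' (y - x)) \<le> 1 * norm (y - x)"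
    then show "norm (f y - f x) \<le> (1 + B) * norm (y - x)"
      using norm_triangle_ineq[of "f y - f x - f' (y - x)" "f' (y - x)"] B[of "y - x"]
      by (simp add: algebra_simps)
  qed
  with \<open>B > 0\<close> that show ?thesis
    by (meson less_eq_real_def add_pos_pos zero_less_one)
qed

lemma std_normal_density_eq: "std_normal_density x = exp (- x\<^sup>2 / 2) / sqrt (2 * pi)"
  by (simp add: normal_density_def)

lemma integrable_std_normal_density_mult:
  fixes f :: "real \<Rightarrow> real"
  assumes f: "f \<in> borel_measurable borel" and "\<eta> < 1/2"
    and f_le: "\<And>x. \<bar>f x\<bar> \<le> C * (1 + x\<^sup>2) ^ n * exp (\<eta> * x\<^sup>2)"
  shows "integrable lborel (\<lambda>x. std_normal_density x * f x)"
proof -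
  define b where "b = (1/2 - \<eta>) / 2"
  define \<sigma> where "\<sigma> = sqrt (1 / (2 * b))"
  define M where "M = \<bar>C\<bar> * max 1 (n / b) ^ n / sqrt (2 * pi) * sqrt (2 * pi * \<sigma>\<^sup>2)"
  have b: "b > 0"
    using assms by (simp add: b_def)
  then have \<sigma>: "\<sigma> > 0" "2 * \<sigma>\<^sup>2 = 1 / b"
    by (simp_all add: \<sigma>_def)
  have majorant: "integrable lborel (\<lambda>x. M * normal_density 0 \<sigma> x)"
    using \<sigma> by (intro integrable_mult_right integrable_normal_density)
  have bound: "std_normal_density x * \<bar>f x\<bar> \<le> M * normal_density 0 \<sigma> x" for x
  proof -
    have "C * (1 + x\<^sup>2) ^ n \<le> \<bar>C\<bar> * (1 + x\<^sup>2) ^ n"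
      by (intro mult_right_mono) auto
    also have "\<dots> \<le> \<bar>C\<bar> * (max 1 (n / b) ^ n * exp (b * x\<^sup>2))"
      using one_plus_square_power_le_exp[OF b] by (intro mult_left_mono) auto
    finally have "C * (1 + x\<^sup>2) ^ n * exp (\<eta> * x\<^sup>2)
        \<le> \<bar>C\<bar> * (max 1 (n / b) ^ n * exp (b * x\<^sup>2)) * exp (\<eta> * x\<^sup>2)"
      by (intro mult_right_mono) auto
    then have "\<bar>f x\<bar> \<le> \<bar>C\<bar> * (max 1 (n / b) ^ n * exp (b * x\<^sup>2)) * exp (\<eta> * x\<^sup>2)"
      using f_le[of x] by linarith
    also have "\<dots> = \<bar>C\<bar> * max 1 (n / b) ^ n * exp (- b * x\<^sup>2) * exp (x\<^sup>2 / 2)"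
      by (simp add: b_def mult_exp_exp algebra_simps)
    finally have "std_normal_density x * \<bar>f x\<bar>
        \<le> exp (- x\<^sup>2 / 2) / sqrt (2 * pi) * (\<bar>C\<bar> * max 1 (n / b) ^ n * exp (- b * x\<^sup>2) * exp (x\<^sup>2 / 2))"
      unfolding std_normal_density_eq by (intro mult_left_mono) auto
    also have "\<dots> = \<bar>C\<bar> * max 1 (n / b) ^ n / sqrt (2 * pi) * exp (- b * x\<^sup>2)"
      by (simp add: field_simps flip: exp_add)
    also have "exp (- b * x\<^sup>2) = sqrt (2 * pi * \<sigma>\<^sup>2) * normal_density 0 \<sigma> x"
      using \<sigma> b by (simp add: normal_density_def field_simps)
    finally show ?thesis
      by (simp add: M_def mult_ac)
  qed
  show ?thesis
  proof (rule Bochner_Integration.integrable_bound[OF majorant])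
    show "AE x in lborel. norm (std_normal_density x * f x) \<le> norm (M * normal_density 0 \<sigma> x)"
      using bound by (intro AE_I2) (simp add: abs_mult normal_density_nonneg M_def)
  qed (use f in simp)
qed

lemma integral_std_normal_low_moments:
  "(LINT x|lborel. std_normal_density x * x) = 0"
  "(LINT x|lborel. std_normal_density x * x\<^sup>2) = 1"
  "(LINT x|lborel. std_normal_density x * x ^ 3) = 0"
  "(LINT x|lborel. std_normal_density x * x ^ 4) = 3"
  using integral_std_normal_moment_odd[of 0] integral_std_normal_moment_even[of 1]
    integral_std_normal_moment_odd[of 1] integral_std_normal_moment_even[of 2]
  by (simp_all add: fact_numeral)

lemma exp_mult_std_normal_density_le:
  fixes \<delta> \<eta> x :: real
  assumes "\<eta> > 0" and "\<delta> + 2 * \<eta> \<le> 1/2"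
  shows "exp (\<delta> * x\<^sup>2) * (std_normal_density x * ((1 + x\<^sup>2)\<^sup>2 * exp (\<eta> * x\<^sup>2)))
    \<le> (max 1 (2 / \<eta>))\<^sup>2 / sqrt (2 * pi)"
proof -
  have "exp (\<delta> * x\<^sup>2) * (std_normal_density x * ((1 + x\<^sup>2)\<^sup>2 * exp (\<eta> * x\<^sup>2)))
      = (1 + x\<^sup>2)\<^sup>2 * exp ((\<delta> + \<eta> - 1/2) * x\<^sup>2) / sqrt (2 * pi)"
    by (simp add: std_normal_density_eq algebra_simps flip: exp_add)
  also have "\<dots> \<le> (max 1 (2 / \<eta>))\<^sup>2 * exp (\<eta> * x\<^sup>2) * exp (- \<eta> * x\<^sup>2) / sqrt (2 * pi)"
  proof (intro divide_right_mono mult_mono)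
    show "(1 + x\<^sup>2)\<^sup>2 \<le> (max 1 (2 / \<eta>))\<^sup>2 * exp (\<eta> * x\<^sup>2)"
      using one_plus_square_power_le_exp[OF \<open>\<eta> > 0\<close>, of x 2] by simp
    have "(\<delta> + \<eta> - 1/2) * x\<^sup>2 \<le> - \<eta> * x\<^sup>2"
      using assms by (intro mult_right_mono) auto
    then show "exp ((\<delta> + \<eta> - 1/2) * x\<^sup>2) \<le> exp (- \<eta> * x\<^sup>2)"
      by simp
  qed auto
  also have "\<dots> = (max 1 (2 / \<eta>))\<^sup>2 / sqrt (2 * pi)"
    by (simp flip: mult.assoc exp_add)
  finally show ?thesis .
qed

definition expfam_offset :: "real \<Rightarrow> real \<Rightarrow> real \<Rightarrow> real^'i::finite \<Rightarrow> real" where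
  "expfam_offset A \<kappa> \<zeta> a = \<bar>A * sqrt (2 * pi) - 1\<bar> + \<bar>\<kappa>\<bar> + \<bar>\<zeta> + 1/2\<bar> + (\<Sum>i\<in>UNIV. \<bar>a $ i\<bar>)"

lemma expfam_offset_le:
  fixes a :: "real^'i::finite"
  shows "expfam_offset A \<kappa> \<zeta> a
    \<le> (sqrt (2 * pi) + 2 + CARD('i)) * norm ((A, \<kappa>, \<zeta>, a) - (1 / sqrt (2 * pi), 0, - 1/2, 0))"
proof -
  define n where "n = norm ((A, \<kappa>, \<zeta>, a) - (1 / sqrt (2 * pi), 0, - 1/2, 0))"
  have "norm (A - 1 / sqrt (2 * pi)) \<le> n" "norm (\<kappa>, \<zeta> + 1/2, a) \<le> n"
    using norm_fst_le[of "A - 1 / sqrt (2 * pi)" "(\<kappa>, \<zeta> + 1/2, a)"]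
      norm_snd_le[of "(\<kappa>, \<zeta> + 1/2, a)" "A - 1 / sqrt (2 * pi)"]
    by (simp_all add: n_def)
  moreover have "norm (\<zeta> + 1/2, a) \<le> norm (\<kappa>, \<zeta> + 1/2, a)"
    by (rule norm_snd_le)
  ultimately have n: "norm (A - 1 / sqrt (2 * pi)) \<le> n" "norm \<kappa> \<le> n" "norm (\<zeta> + 1/2) \<le> n" "norm a \<le> n"
    using norm_fst_le[of \<kappa>] norm_fst_le[of "\<zeta> + 1/2"] norm_snd_le[of a] by (blast intro: order_trans)+
  have "A * sqrt (2 * pi) - 1 = sqrt (2 * pi) * (A - 1 / sqrt (2 * pi))"
    by (simp add: field_simps)
  then have "\<bar>A * sqrt (2 * pi) - 1\<bar> = sqrt (2 * pi) * \<bar>A - 1 / sqrt (2 * pi)\<bar>"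
    by (simp add: abs_mult)
  also have "\<dots> \<le> sqrt (2 * pi) * n"
    using n by (intro mult_left_mono) auto
  finally have "\<bar>A * sqrt (2 * pi) - 1\<bar> \<le> sqrt (2 * pi) * n" .
  moreover have "(\<Sum>i\<in>UNIV. \<bar>a $ i\<bar>) \<le> CARD('i) * n"
    using sum_bounded_above[of UNIV "\<lambda>i. \<bar>a $ i\<bar>" n] n(4) component_le_norm_cart[of a]
    by (meson order_trans)
  ultimately show ?thesis
    using n by (simp add: expfam_offset_def n_def algebra_simps)
qed

lemma eventually_expfam_offset_le:
  fixes A \<kappa> \<zeta> :: "'a::{real_normed_vector, perfect_space} \<Rightarrow> real" and a :: "'a \<Rightarrow> real^'i::finite"
  assumes "((\<lambda>c. (A c, \<kappa> c, \<zeta> c, a c)) has_derivative D) (at 0)"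
    and "((\<lambda>c. (A c, \<kappa> c, \<zeta> c, a c)) \<longlongrightarrow> (1 / sqrt (2 * pi), 0, - 1/2, 0)) (at 0)"
  obtains N where "N \<ge> 0" and "\<forall>\<^sub>F c in at 0. expfam_offset (A c) (\<kappa> c) (\<zeta> c) (a c) \<le> N * norm c"
proof -
  define P where "P = (\<lambda>c. (A c, \<kappa> c, \<zeta> c, a c))"
  have "(P \<longlongrightarrow> P 0) (at 0)"
    using has_derivative_continuous[OF assms(1)] by (simp add: P_def isCont_def)
  from tendsto_unique[OF at_neq_bot this assms(2)[folded P_def]]
  have P0: "P 0 = (1 / sqrt (2 * pi), 0, - 1/2, 0)" .
  obtain M where "M \<ge> 0" and lipschitz: "\<forall>\<^sub>F c in at 0. norm (P c - P 0) \<le> M * norm c"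
    using has_derivative_imp_eventually_lipschitz[OF assms(1)] by (auto simp: P_def)
  from lipschitz have "\<forall>\<^sub>F c in at 0. expfam_offset (A c) (\<kappa> c) (\<zeta> c) (a c) \<le> ((sqrt (2 * pi) + 2 + CARD('i)) * M) * norm c"
  proof (rule eventually_mono)
    fix c
    assume "norm (P c - P 0) \<le> M * norm c"
    then have "(sqrt (2 * pi) + 2 + CARD('i)) * norm (P c - P 0) \<le> (sqrt (2 * pi) + 2 + CARD('i)) * (M * norm c)"
      by (intro mult_left_mono) auto
    then show "expfam_offset (A c) (\<kappa> c) (\<zeta> c) (a c) \<le> ((sqrt (2 * pi) + 2 + CARD('i)) * M) * norm c"
      using expfam_offset_le[of "A c" "\<kappa> c" "\<zeta> c" "a c"] by (simp add: P0 mult.assoc) (simp add: P_def)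
  qed
  moreover have "0 \<le> (sqrt (2 * pi) + 2 + CARD('i)) * M"
    using \<open>M \<ge> 0\<close> by simp
  ultimately show ?thesis
    using that by blast
qed

definition moment_matched :: "(real \<Rightarrow> real) \<Rightarrow> ('i::finite \<Rightarrow> real \<Rightarrow> real) \<Rightarrow> real^'i \<Rightarrow> bool" where
  "moment_matched f K c \<longleftrightarrow>
     has_bochner_integral lborel f 1 \<and> has_bochner_integral lborel (\<lambda>x. x * f x) 0 \<and>
     has_bochner_integral lborel (\<lambda>x. x\<^sup>2 * f x) 1 \<and>
     (\<forall>i. has_bochner_integral lborel (\<lambda>x. f x * K i x) (c $ i))"

locale bounded_orthonormal_system =
  fixes K :: "'i::finite \<Rightarrow> real \<Rightarrow> real" and L :: real
  assumes K_measurable [measurable]: "\<And>i. K i \<in> borel_measurable borel"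
    and abs_K_le: "\<And>i x. \<bar>K i x\<bar> \<le> L"
    and one_le_L: "1 \<le> L"
    and orthonormal: "\<And>i j. (LINT x|lborel. K i x * K j x * std_normal_density x) = (if i = j then 1 else 0)"
    and orthogonal_quadratics: "\<And>i k. k \<le> 2 \<Longrightarrow> (LINT x|lborel. K i x * x ^ k * std_normal_density x) = 0"
begin

definition tilt_exponent :: "real \<Rightarrow> real \<Rightarrow> real^'i \<Rightarrow> real \<Rightarrow> real" where
  "tilt_exponent k z a x = k * x + z * x\<^sup>2 + (\<Sum>i\<in>UNIV. a $ i * K i x)"

definition remainder_constant :: "real \<Rightarrow> real" where
  "remainder_constant \<eta> = 2 * L ^ 3 * (LINT x|lborel. std_normal_density x * ((1 + x\<^sup>2) ^ 3 * exp (\<eta> * (1 + x\<^sup>2))))"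

lemma remainder_constant_nonneg: "0 \<le> remainder_constant \<eta>"
  using one_le_L unfolding remainder_constant_def by (intro mult_nonneg_nonneg integral_nonneg_AE AE_I2) auto

lemma le_L_mult_one_plus_square: "1 + x\<^sup>2 \<le> L * (1 + x\<^sup>2)" "L \<le> L * (1 + x\<^sup>2)"
proof -
  have "1 * (1 + x\<^sup>2) \<le> L * (1 + x\<^sup>2)" "L * 1 \<le> L * (1 + x\<^sup>2)"
    using one_le_L by (intro mult_right_mono mult_left_mono; simp)+
  then show "1 + x\<^sup>2 \<le> L * (1 + x\<^sup>2)" "L \<le> L * (1 + x\<^sup>2)"
    by simp_all
qed

lemma abs_tilt_exponent_le:
  "\<bar>tilt_exponent k z a x\<bar> \<le> (\<bar>k\<bar> + \<bar>z\<bar> + (\<Sum>i\<in>UNIV. \<bar>a $ i\<bar>)) * L * (1 + x\<^sup>2)"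
proof -
  note w = le_L_mult_one_plus_square(1)[of x]
  have "\<bar>k * x\<bar> \<le> \<bar>k\<bar> * (L * (1 + x\<^sup>2))"
    unfolding abs_mult using abs_le_one_plus_square[of x] w by (intro mult_left_mono) auto
  moreover have "\<bar>z * x\<^sup>2\<bar> \<le> \<bar>z\<bar> * (L * (1 + x\<^sup>2))"
    unfolding abs_mult using w by (intro mult_left_mono) auto
  moreover have "\<bar>a $ i * K i x\<bar> \<le> \<bar>a $ i\<bar> * (L * (1 + x\<^sup>2))" for i
    unfolding abs_mult using abs_K_le[of i x] le_L_mult_one_plus_square(2)[of x]
    by (intro mult_left_mono) auto
  then have "\<bar>\<Sum>i\<in>UNIV. a $ i * K i x\<bar> \<le> (\<Sum>i\<in>UNIV. \<bar>a $ i\<bar>) * (L * (1 + x\<^sup>2))"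
    unfolding sum_distrib_right by (intro order_trans[OF sum_abs] sum_mono)
  ultimately show ?thesis
    unfolding tilt_exponent_def by (simp add: algebra_simps) linarith
qed

lemma abs_add_tilt_exponent_le:
  assumes "\<bar>s\<bar> + \<bar>k\<bar> + \<bar>z\<bar> + (\<Sum>i\<in>UNIV. \<bar>a $ i\<bar>) \<le> \<sigma>"
  shows "\<bar>s + tilt_exponent k z a x\<bar> \<le> \<sigma> * L * (1 + x\<^sup>2)"
proof -
  have "1 \<le> L * (1 + x\<^sup>2)"
    using order_trans[OF _ le_L_mult_one_plus_square(1)[of x], of 1] by simp
  then have "\<bar>s + tilt_exponent k z a x\<bar> \<le> \<bar>s\<bar> * (L * (1 + x\<^sup>2)) + (\<bar>k\<bar> + \<bar>z\<bar> + (\<Sum>i\<in>UNIV. \<bar>a $ i\<bar>)) * L * (1 + x\<^sup>2)"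
    using abs_tilt_exponent_le[of k z a x] mult_left_mono[of 1 "L * (1 + x\<^sup>2)" "\<bar>s\<bar>"] by simp
  also have "\<dots> \<le> \<sigma> * L * (1 + x\<^sup>2)"
    using mult_right_mono[OF assms, of "L * (1 + x\<^sup>2)"] \<open>1 \<le> L * (1 + x\<^sup>2)\<close> by (simp add: algebra_simps)
  finally show ?thesis .
qed

lemma abs_tilt_remainder_le:
  assumes \<rho>: "\<bar>s\<bar> + \<bar>k\<bar> + \<bar>z\<bar> + (\<Sum>i\<in>UNIV. \<bar>a $ i\<bar>) \<le> \<rho>" and \<rho>L: "\<rho> * L \<le> \<eta>" and "\<eta> < 1/2"
  shows "\<bar>(1 + s) * exp (tilt_exponent k z a x) - 1 - s - tilt_exponent k z a x\<bar>
    \<le> 2 * L\<^sup>2 * \<rho>\<^sup>2 * (1 + x\<^sup>2)\<^sup>2 * exp (\<eta> * (1 + x\<^sup>2))"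
proof -
  define w where "w = 1 + x\<^sup>2"
  have "0 \<le> \<bar>k\<bar> + \<bar>z\<bar> + (\<Sum>i\<in>UNIV. \<bar>a $ i\<bar>)"
    by (simp add: sum_nonneg)
  then have "\<bar>s\<bar> \<le> \<rho>" and "\<rho> \<ge> 0"
    using \<rho> by linarith+
  have "1 \<le> L * w"
    using order_trans[OF _ le_L_mult_one_plus_square(1)[of x], of 1] by (simp add: w_def)
  then have s: "\<bar>s\<bar> \<le> \<rho> * L * w" "\<bar>s\<bar> \<le> 1"
    using \<open>\<bar>s\<bar> \<le> \<rho>\<close> \<open>\<rho> \<ge> 0\<close> mult_left_mono[OF \<open>1 \<le> L * w\<close> \<open>\<rho> \<ge> 0\<close>]
      mult_left_mono[OF one_le_L \<open>\<rho> \<ge> 0\<close>] assms by (simp_all add: mult.assoc)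
  have "\<bar>tilt_exponent k z a x\<bar> \<le> (\<bar>k\<bar> + \<bar>z\<bar> + (\<Sum>i\<in>UNIV. \<bar>a $ i\<bar>)) * L * w"
    unfolding w_def by (rule abs_tilt_exponent_le)
  also have "\<dots> \<le> \<rho> * L * w"
    using \<rho> one_le_L by (intro mult_right_mono) (auto simp: w_def)
  finally have "\<bar>(1 + s) * exp (tilt_exponent k z a x) - 1 - s - tilt_exponent k z a x\<bar>
      \<le> 2 * (\<rho> * L * w)\<^sup>2 * exp (\<rho> * L * w)"
    using s by (rule abs_linearised_exp_le)
  also have "\<dots> = 2 * L\<^sup>2 * \<rho>\<^sup>2 * w\<^sup>2 * exp (\<rho> * L * w)"
    by (simp add: power_mult_distrib mult_ac)
  also have "\<dots> \<le> 2 * L\<^sup>2 * \<rho>\<^sup>2 * w\<^sup>2 * exp (\<eta> * w)"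
    using mult_right_mono[OF \<rho>L, of w] by (intro mult_left_mono) (auto simp: w_def)
  finally show ?thesis
    by (simp add: w_def)
qed

lemma has_bochner_integral_linear_tilt:
  assumes [measurable]: "T \<in> borel_measurable borel" and T_le: "\<And>x. \<bar>T x\<bar> \<le> L * (1 + x\<^sup>2)"
  shows "has_bochner_integral lborel (\<lambda>x. std_normal_density x * ((1 + s + tilt_exponent k z a x) * T x))
    ((1 + s) * (LINT x|lborel. std_normal_density x * T x)
     + k * (LINT x|lborel. std_normal_density x * (x * T x))
     + z * (LINT x|lborel. std_normal_density x * (x\<^sup>2 * T x))
     + (\<Sum>i\<in>UNIV. a $ i * (LINT x|lborel. std_normal_density x * (K i x * T x))))"
proof -
  have L: "L \<le> L\<^sup>2" "L \<ge> 0"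
    using one_le_L by (simp_all add: power2_eq_square)
  have w: "1 + x\<^sup>2 \<le> (1 + x\<^sup>2)\<^sup>2" for x :: real
    using mult_left_mono[of 1 "1 + x\<^sup>2" "1 + x\<^sup>2"] by (simp add: power2_eq_square[of "1 + x\<^sup>2"])
  have "\<bar>T x\<bar> \<le> L\<^sup>2 * (1 + x\<^sup>2)\<^sup>2" for x
    by (intro order_trans[OF T_le[of x]] mult_mono L w) auto
  moreover have "\<bar>x * T x\<bar> \<le> L\<^sup>2 * (1 + x\<^sup>2)\<^sup>2" "\<bar>x\<^sup>2 * T x\<bar> \<le> L\<^sup>2 * (1 + x\<^sup>2)\<^sup>2" for x
  proof -
    have "\<bar>x\<bar> * \<bar>T x\<bar> \<le> (1 + x\<^sup>2) * (L * (1 + x\<^sup>2))" "x\<^sup>2 * \<bar>T x\<bar> \<le> (1 + x\<^sup>2) * (L * (1 + x\<^sup>2))"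
      using T_le[of x] abs_le_one_plus_square[of x] by (auto intro!: mult_mono)
    moreover have "(1 + x\<^sup>2) * (L * (1 + x\<^sup>2)) \<le> L\<^sup>2 * (1 + x\<^sup>2)\<^sup>2"
      using mult_right_mono[OF L(1), of "(1 + x\<^sup>2)\<^sup>2"] by (simp add: power2_eq_square[of "1 + x\<^sup>2"] mult_ac)
    ultimately show "\<bar>x * T x\<bar> \<le> L\<^sup>2 * (1 + x\<^sup>2)\<^sup>2" "\<bar>x\<^sup>2 * T x\<bar> \<le> L\<^sup>2 * (1 + x\<^sup>2)\<^sup>2"
      by (simp_all add: abs_mult)
  qed
  moreover have "\<bar>K i x * T x\<bar> \<le> L\<^sup>2 * (1 + x\<^sup>2)\<^sup>2" for i x
  proof -
    have "\<bar>K i x * T x\<bar> \<le> L * (L * (1 + x\<^sup>2))"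
      unfolding abs_mult using abs_K_le[of i x] T_le[of x] L by (intro mult_mono) auto
    also have "\<dots> \<le> L\<^sup>2 * (1 + x\<^sup>2)\<^sup>2"
      using mult_left_mono[OF w[of x], of "L\<^sup>2"] by (simp add: power2_eq_square[of L] mult_ac)
    finally show ?thesis .
  qed
  ultimately have int: "integrable lborel (\<lambda>x. std_normal_density x * T x)"
    "integrable lborel (\<lambda>x. std_normal_density x * (x * T x))"
    "integrable lborel (\<lambda>x. std_normal_density x * (x\<^sup>2 * T x))"
    "\<And>i. integrable lborel (\<lambda>x. std_normal_density x * (K i x * T x))"
    by (auto intro!: integrable_std_normal_density_mult[where \<eta>=0 and n=2 and C="L\<^sup>2"])
  have "(\<lambda>x. std_normal_density x * ((1 + s + tilt_exponent k z a x) * T x))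
      = (\<lambda>x. (1 + s) * (std_normal_density x * T x) + k * (std_normal_density x * (x * T x))
           + z * (std_normal_density x * (x\<^sup>2 * T x))
           + (\<Sum>i\<in>UNIV. a $ i * (std_normal_density x * (K i x * T x))))"
    by (auto simp: tilt_exponent_def algebra_simps sum_distrib_left sum_distrib_right)
  then show ?thesis
    using int by (simp only:) (intro has_bochner_integral_add has_bochner_integral_mult_right
        has_bochner_integral_sum has_bochner_integral_integrable)
qed

lemma abs_tilted_moment_minus_linear_le:
  assumes [measurable]: "T \<in> borel_measurable borel" and T_le: "\<And>x. \<bar>T x\<bar> \<le> L * (1 + x\<^sup>2)"
    and \<rho>: "\<bar>s\<bar> + \<bar>k\<bar> + \<bar>z\<bar> + (\<Sum>i\<in>UNIV. \<bar>a $ i\<bar>) \<le> \<rho>" and \<rho>L: "\<rho> * L \<le> \<eta>" and "\<eta> < 1/2"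
    and tilted: "has_bochner_integral lborel
      (\<lambda>x. std_normal_density x * ((1 + s) * exp (tilt_exponent k z a x)) * T x) \<mu>"
  shows "\<bar>\<mu> - (LINT x|lborel. std_normal_density x * ((1 + s + tilt_exponent k z a x) * T x))\<bar>
    \<le> remainder_constant \<eta> * \<rho>\<^sup>2"
proof -
  define R where "R x = (1 + s) * exp (tilt_exponent k z a x) - 1 - s - tilt_exponent k z a x" for x
  define g where "g x = std_normal_density x * ((1 + x\<^sup>2) ^ 3 * exp (\<eta> * (1 + x\<^sup>2)))" for x
  have linear: "integrable lborel (\<lambda>x. std_normal_density x * ((1 + s + tilt_exponent k z a x) * T x))"
    using has_bochner_integral_linear_tilt[OF assms(1,2), of s k z a] by (rule integrable.intros)
  have remainder: "has_bochner_integral lborel (\<lambda>x. std_normal_density x * (R x * T x))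
      (\<mu> - (LINT x|lborel. std_normal_density x * ((1 + s + tilt_exponent k z a x) * T x)))"
    using has_bochner_integral_diff[OF tilted has_bochner_integral_integrable[OF linear]]
    by (simp add: R_def algebra_simps)
  have "integrable lborel g"
    unfolding g_def
    by (rule integrable_std_normal_density_mult[where C="exp \<eta>" and n=3 and \<eta>=\<eta>])
      (use \<open>\<eta> < 1/2\<close> in \<open>auto simp: distrib_left exp_add\<close>)
  moreover have "\<bar>std_normal_density x * (R x * T x)\<bar> \<le> 2 * L ^ 3 * \<rho>\<^sup>2 * g x" for x
  proof -
    have "\<bar>R x\<bar> \<le> 2 * L\<^sup>2 * \<rho>\<^sup>2 * (1 + x\<^sup>2)\<^sup>2 * exp (\<eta> * (1 + x\<^sup>2))"
      unfolding R_def using \<rho> \<rho>L \<open>\<eta> < 1/2\<close> by (rule abs_tilt_remainder_le)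
    then have "\<bar>R x * T x\<bar> \<le> (2 * L\<^sup>2 * \<rho>\<^sup>2 * (1 + x\<^sup>2)\<^sup>2 * exp (\<eta> * (1 + x\<^sup>2))) * (L * (1 + x\<^sup>2))"
      unfolding abs_mult using T_le by (intro mult_mono) auto
    also have "\<dots> = 2 * L ^ 3 * \<rho>\<^sup>2 * ((1 + x\<^sup>2) ^ 3 * exp (\<eta> * (1 + x\<^sup>2)))"
      by (simp add: power2_eq_square power3_eq_cube mult_ac)
    finally have "std_normal_density x * \<bar>R x * T x\<bar>
        \<le> std_normal_density x * (2 * L ^ 3 * \<rho>\<^sup>2 * ((1 + x\<^sup>2) ^ 3 * exp (\<eta> * (1 + x\<^sup>2))))"
      by (intro mult_left_mono) auto
    then show ?thesis
      by (simp add: g_def abs_mult mult_ac)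
  qed
  ultimately have "\<bar>LINT x|lborel. std_normal_density x * (R x * T x)\<bar> \<le> (LINT x|lborel. 2 * L ^ 3 * \<rho>\<^sup>2 * g x)"
    using remainder by (intro integral_abs_bound_integral) (auto simp: has_bochner_integral_iff)
  also have "(LINT x|lborel. 2 * L ^ 3 * \<rho>\<^sup>2 * g x) = remainder_constant \<eta> * \<rho>\<^sup>2"
    unfolding remainder_constant_def g_def by (subst integral_mult_right_zero) (simp add: mult_ac)
  finally show ?thesis
    using remainder by (simp add: has_bochner_integral_iff)
qed

lemma tilt_parameters_le:
  assumes \<rho>: "\<bar>s\<bar> + \<bar>k\<bar> + \<bar>z\<bar> + (\<Sum>i\<in>UNIV. \<bar>a $ i\<bar>) \<le> \<rho>" and \<rho>L: "\<rho> * L \<le> \<eta>" and "\<eta> < 1/2"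
    and matched: "moment_matched (\<lambda>x. std_normal_density x * ((1 + s) * exp (tilt_exponent k z a x))) K c"
  shows "\<bar>s\<bar> + \<bar>k\<bar> + \<bar>z\<bar> + (\<Sum>i\<in>UNIV. \<bar>a $ i - c $ i\<bar>)
    \<le> (4 + CARD('i)) * remainder_constant \<eta> * \<rho>\<^sup>2"
proof -
  define E where "E = remainder_constant \<eta> * \<rho>\<^sup>2"
  let ?f = "\<lambda>x. std_normal_density x * ((1 + s) * exp (tilt_exponent k z a x))"
  have defect: "\<bar>\<mu> - (LINT x|lborel. std_normal_density x * ((1 + s + tilt_exponent k z a x) * T x))\<bar> \<le> E"
    if "T \<in> borel_measurable borel" "\<And>x. \<bar>T x\<bar> \<le> L * (1 + x\<^sup>2)"
      "has_bochner_integral lborel (\<lambda>x. ?f x * T x) \<mu>" for T \<mu>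
    unfolding E_def using abs_tilted_moment_minus_linear_le[OF that(1,2) \<rho> \<rho>L \<open>\<eta> < 1/2\<close> that(3)] .
  have linear: "(LINT x|lborel. std_normal_density x * ((1 + s + tilt_exponent k z a x) * T x)) =
      (1 + s) * (LINT x|lborel. std_normal_density x * T x)
     + k * (LINT x|lborel. std_normal_density x * (x * T x))
     + z * (LINT x|lborel. std_normal_density x * (x\<^sup>2 * T x))
     + (\<Sum>i\<in>UNIV. a $ i * (LINT x|lborel. std_normal_density x * (K i x * T x)))"
    if "T \<in> borel_measurable borel" "\<And>x. \<bar>T x\<bar> \<le> L * (1 + x\<^sup>2)" for T
    using has_bochner_integral_linear_tilt[OF that] by (rule has_bochner_integral_integral_eq)
  have bounds: "\<bar>1\<bar> \<le> L * (1 + x\<^sup>2)" "\<bar>x\<bar> \<le> L * (1 + x\<^sup>2)" "\<bar>x\<^sup>2\<bar> \<le> L * (1 + x\<^sup>2)"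
    "\<bar>K i x\<bar> \<le> L * (1 + x\<^sup>2)" for x i
    using abs_le_one_plus_square[of x] abs_K_le[of i x] le_L_mult_one_plus_square[of x] one_le_L
    by (auto intro: order_trans)
  note moments = matched[unfolded moment_matched_def]
  \<comment> \<open>The linearised moments of \<open>1, x, x\<^sup>2, K\<^sub>j\<close> are \<open>1 + s + z, k, 1 + s + 3 z, a\<^sub>j\<close>.\<close>
  note gauss = integral_std_normal_low_moments orthonormal
    orthogonal_quadratics[of 0] orthogonal_quadratics[of 1] orthogonal_quadratics[of 2]
  have "\<bar>1 - (1 + s + z)\<bar> \<le> E"
    using defect[of "\<lambda>_. 1" 1] linear[of "\<lambda>_. 1"] moments bounds gauss
    by (simp add: power2_eq_square mult_ac eval_nat_numeral)
  moreover have "\<bar>0 - k\<bar> \<le> E"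
    using defect[of "\<lambda>x. x" 0] linear[of "\<lambda>x. x"] moments bounds gauss
    by (simp add: power2_eq_square mult_ac eval_nat_numeral)
  moreover have "\<bar>1 - (1 + s + 3 * z)\<bar> \<le> E"
    using defect[of "\<lambda>x. x\<^sup>2" 1] linear[of "\<lambda>x. x\<^sup>2"] moments bounds gauss
    by (simp add: power2_eq_square mult_ac eval_nat_numeral)
  moreover have "\<bar>c $ j - a $ j\<bar> \<le> E" for j
  proof -
    have KK: "(LINT x|lborel. std_normal_density x * (K i x * K j x)) = (if i = j then 1 else 0)" for i
      using orthonormal[of i j] by (simp add: mult_ac)
    have "(\<Sum>i\<in>UNIV. a $ i * (LINT x|lborel. std_normal_density x * (K i x * K j x))) = a $ j"
      by (simp add: KK if_distrib sum.delta cong: if_cong)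
    then show ?thesis
      using defect[of "K j" "c $ j"] linear[of "K j"] moments bounds gauss
      by (simp add: power2_eq_square mult_ac eval_nat_numeral)
  qed
  then have "(\<Sum>i\<in>UNIV. \<bar>a $ i - c $ i\<bar>) \<le> CARD('i) * E"
    using sum_bounded_above[of UNIV "\<lambda>i. \<bar>a $ i - c $ i\<bar>" E] by (simp add: abs_minus_commute)
  ultimately show ?thesis
    by (simp add: E_def algebra_simps)
qed

lemma abs_tilted_density_minus_linear_le:
  assumes \<rho>: "\<bar>s\<bar> + \<bar>k\<bar> + \<bar>z\<bar> + (\<Sum>i\<in>UNIV. \<bar>a $ i\<bar>) \<le> \<rho>" and \<rho>L: "\<rho> * L \<le> \<eta>" and "\<eta> < 1/2"
    and \<sigma>: "\<bar>s\<bar> + \<bar>k\<bar> + \<bar>z\<bar> + (\<Sum>i\<in>UNIV. \<bar>a $ i - c $ i\<bar>) \<le> \<sigma>"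
  shows "\<bar>std_normal_density x * ((1 + s) * exp (tilt_exponent k z a x)) - expfam_lin c K x\<bar>
    \<le> std_normal_density x * ((1 + x\<^sup>2)\<^sup>2 * exp (\<eta> * x\<^sup>2)) * (\<sigma> * L + 2 * L\<^sup>2 * \<rho>\<^sup>2 * exp \<eta>)"
proof -
  define v where "v = tilt_exponent k z a x"
  define w where "w = 1 + x\<^sup>2"
  have "w \<ge> 1"
    by (simp add: w_def)
  have "0 \<le> \<bar>k\<bar> + \<bar>z\<bar> + (\<Sum>i\<in>UNIV. \<bar>a $ i\<bar>)" "0 \<le> \<bar>k\<bar> + \<bar>z\<bar> + (\<Sum>i\<in>UNIV. \<bar>a $ i - c $ i\<bar>)"
    by (simp_all add: sum_nonneg)
  then have "\<rho> \<ge> 0" "\<sigma> \<ge> 0"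
    using \<rho> \<sigma> by linarith+
  then have "\<eta> \<ge> 0"
    using \<rho>L one_le_L by (metis mult_nonneg_nonneg order_trans zero_le_one)
  have "\<bar>s + tilt_exponent k z (a - c) x\<bar> \<le> \<sigma> * L * w"
    using abs_add_tilt_exponent_le[of s k z "a - c" \<sigma> x] \<sigma> by (simp add: w_def)
  also have "\<dots> \<le> \<sigma> * L * (w\<^sup>2 * exp (\<eta> * x\<^sup>2))"
  proof (intro mult_left_mono)
    have "w * 1 \<le> w * w * exp (\<eta> * x\<^sup>2)"
      using \<open>w \<ge> 1\<close> \<open>\<eta> \<ge> 0\<close> by (intro mult_mono) auto
    then show "w \<le> w\<^sup>2 * exp (\<eta> * x\<^sup>2)"
      by (simp add: power2_eq_square)
  qed (use \<open>\<sigma> \<ge> 0\<close> one_le_L in auto)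
  finally have linear: "\<bar>s + tilt_exponent k z (a - c) x\<bar> \<le> \<sigma> * L * (w\<^sup>2 * exp (\<eta> * x\<^sup>2))" .
  have "\<bar>(1 + s) * exp v - (1 + (\<Sum>i\<in>UNIV. c $ i * K i x))\<bar>
      = \<bar>(s + tilt_exponent k z (a - c) x) + ((1 + s) * exp v - 1 - s - v)\<bar>"
    by (rule arg_cong[where f=abs]) (simp add: v_def tilt_exponent_def algebra_simps sum_subtractf)
  also have "\<dots> \<le> \<bar>s + tilt_exponent k z (a - c) x\<bar> + \<bar>(1 + s) * exp v - 1 - s - v\<bar>"
    by (rule abs_triangle_ineq)
  also have "\<dots> \<le> \<sigma> * L * (w\<^sup>2 * exp (\<eta> * x\<^sup>2)) + 2 * L\<^sup>2 * \<rho>\<^sup>2 * w\<^sup>2 * exp (\<eta> * w)"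
    using linear abs_tilt_remainder_le[OF \<rho> \<rho>L \<open>\<eta> < 1/2\<close>] by (intro add_mono) (simp_all add: v_def w_def)
  also have "\<dots> = w\<^sup>2 * exp (\<eta> * x\<^sup>2) * (\<sigma> * L + 2 * L\<^sup>2 * \<rho>\<^sup>2 * exp \<eta>)"
    by (simp add: w_def distrib_left exp_add algebra_simps)
  finally have "std_normal_density x * \<bar>(1 + s) * exp v - (1 + (\<Sum>i\<in>UNIV. c $ i * K i x))\<bar>
      \<le> std_normal_density x * (w\<^sup>2 * exp (\<eta> * x\<^sup>2) * (\<sigma> * L + 2 * L\<^sup>2 * \<rho>\<^sup>2 * exp \<eta>))"
    by (intro mult_left_mono) auto
  moreover have "std_normal_density x * ((1 + s) * exp v) - expfam_lin c K x
      = std_normal_density x * ((1 + s) * exp v - (1 + (\<Sum>i\<in>UNIV. c $ i * K i x)))"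
    by (simp add: expfam_lin_def right_diff_distrib)
  ultimately show ?thesis
    by (simp add: v_def w_def abs_mult mult.assoc)
qed

lemma expfam_eq_tilted:
  "expfam A \<kappa> \<zeta> a K x = std_normal_density x * (A * sqrt (2 * pi) * exp (tilt_exponent \<kappa> (\<zeta> + 1/2) a x))"
  by (simp add: expfam_def std_normal_density_eq tilt_exponent_def algebra_simps flip: exp_add)

lemma abs_exp_mult_expfam_minus_expfam_lin_le:
  assumes "\<eta> > 0" and "\<eta> < 1/2" and "\<delta> + 2 * \<eta> \<le> 1/2"
    and matched: "moment_matched (expfam A \<kappa> \<zeta> a K) K c" and \<rho>L: "expfam_offset A \<kappa> \<zeta> a * L \<le> \<eta>"
  shows "\<bar>exp (\<delta> * x\<^sup>2) * (expfam A \<kappa> \<zeta> a K x - expfam_lin c K x)\<bar>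
    \<le> (max 1 (2 / \<eta>))\<^sup>2 / sqrt (2 * pi) * ((4 + CARD('i)) * remainder_constant \<eta> * L + 2 * L\<^sup>2 * exp \<eta>)
      * (expfam_offset A \<kappa> \<zeta> a)\<^sup>2"
proof -
  define s where "s = A * sqrt (2 * pi) - 1"
  define \<rho> where "\<rho> = expfam_offset A \<kappa> \<zeta> a"
  define E where "E = (4 + CARD('i)) * remainder_constant \<eta> * L + 2 * L\<^sup>2 * exp \<eta>"
  have f: "expfam A \<kappa> \<zeta> a K = (\<lambda>x. std_normal_density x * ((1 + s) * exp (tilt_exponent \<kappa> (\<zeta> + 1/2) a x)))"
    by (simp add: s_def expfam_eq_tilted fun_eq_iff)
  have \<rho>: "\<bar>s\<bar> + \<bar>\<kappa>\<bar> + \<bar>\<zeta> + 1/2\<bar> + (\<Sum>i\<in>UNIV. \<bar>a $ i\<bar>) \<le> \<rho>"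
    by (simp add: s_def \<rho>_def expfam_offset_def)
  have \<sigma>: "\<bar>s\<bar> + \<bar>\<kappa>\<bar> + \<bar>\<zeta> + 1/2\<bar> + (\<Sum>i\<in>UNIV. \<bar>a $ i - c $ i\<bar>) \<le> (4 + CARD('i)) * remainder_constant \<eta> * \<rho>\<^sup>2"
    using tilt_parameters_le[OF \<rho>] matched \<rho>L \<open>\<eta> < 1/2\<close> unfolding f \<rho>_def by blast
  have "\<bar>expfam A \<kappa> \<zeta> a K x - expfam_lin c K x\<bar> \<le> std_normal_density x * ((1 + x\<^sup>2)\<^sup>2 * exp (\<eta> * x\<^sup>2))
      * ((4 + CARD('i)) * remainder_constant \<eta> * \<rho>\<^sup>2 * L + 2 * L\<^sup>2 * \<rho>\<^sup>2 * exp \<eta>)"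
    unfolding f using abs_tilted_density_minus_linear_le[OF \<rho> _ \<open>\<eta> < 1/2\<close> \<sigma>] \<rho>L by (simp add: \<rho>_def)
  also have "\<dots> = std_normal_density x * ((1 + x\<^sup>2)\<^sup>2 * exp (\<eta> * x\<^sup>2)) * (E * \<rho>\<^sup>2)"
    by (simp add: E_def algebra_simps)
  finally have "\<bar>expfam A \<kappa> \<zeta> a K x - expfam_lin c K x\<bar>
      \<le> std_normal_density x * ((1 + x\<^sup>2)\<^sup>2 * exp (\<eta> * x\<^sup>2)) * (E * \<rho>\<^sup>2)" .
  then have "\<bar>exp (\<delta> * x\<^sup>2) * (expfam A \<kappa> \<zeta> a K x - expfam_lin c K x)\<bar>
      \<le> exp (\<delta> * x\<^sup>2) * (std_normal_density x * ((1 + x\<^sup>2)\<^sup>2 * exp (\<eta> * x\<^sup>2))) * (E * \<rho>\<^sup>2)"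
    by (simp add: abs_mult mult_left_mono mult.assoc)
  also have "\<dots> \<le> (max 1 (2 / \<eta>))\<^sup>2 / sqrt (2 * pi) * (E * \<rho>\<^sup>2)"
    using exp_mult_std_normal_density_le[OF assms(1,3)] remainder_constant_nonneg one_le_L
    by (intro mult_right_mono) (auto simp: E_def)
  finally show ?thesis
    by (simp add: E_def \<rho>_def mult.assoc)
qed

lemma eventually_abs_exp_mult_expfam_minus_expfam_lin_le:
  fixes A \<kappa> \<zeta> :: "real^'i \<Rightarrow> real" and a :: "real^'i \<Rightarrow> real^'i"
  assumes "\<delta> < 1/2" and "N \<ge> 0"
    and matched: "\<forall>\<^sub>F c in at 0. moment_matched (expfam (A c) (\<kappa> c) (\<zeta> c) (a c) K) K c"
    and offset: "\<forall>\<^sub>F c in at 0. expfam_offset (A c) (\<kappa> c) (\<zeta> c) (a c) \<le> N * norm c"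
  shows "\<exists>C. \<forall>\<^sub>F c in at 0. \<forall>x.
    \<bar>exp (\<delta> * x\<^sup>2) * (expfam (A c) (\<kappa> c) (\<zeta> c) (a c) K x - expfam_lin c K x)\<bar> \<le> C * (norm c)\<^sup>2"
proof
  define \<eta> where "\<eta> = (1/2 - max \<delta> 0) / 2"
  define C where "C = (max 1 (2 / \<eta>))\<^sup>2 / sqrt (2 * pi) * ((4 + CARD('i)) * remainder_constant \<eta> * L + 2 * L\<^sup>2 * exp \<eta>)"
  have \<eta>: "\<eta> > 0" "\<eta> < 1/2" "\<delta> + 2 * \<eta> \<le> 1/2"
    using assms by (auto simp: \<eta>_def max_def field_simps)
  have "C \<ge> 0"
    using remainder_constant_nonneg one_le_L by (simp add: C_def)
  have "\<forall>\<^sub>F c in at 0. norm c < \<eta> / (N * L + 1)"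
    using \<eta> \<open>N \<ge> 0\<close> one_le_L
    by (intro order_tendstoD(2)[OF tendsto_norm_zero[OF tendsto_ident_at]]) (auto simp: add_nonneg_pos)
  with matched offset show "\<forall>\<^sub>F c in at 0. \<forall>x.
    \<bar>exp (\<delta> * x\<^sup>2) * (expfam (A c) (\<kappa> c) (\<zeta> c) (a c) K x - expfam_lin c K x)\<bar> \<le> C * N\<^sup>2 * (norm c)\<^sup>2"
  proof eventually_elim
    case (elim c)
    have "expfam_offset (A c) (\<kappa> c) (\<zeta> c) (a c) * L \<le> N * norm c * L"
      using elim one_le_L by (intro mult_right_mono) auto
    also have "\<dots> \<le> (N * L + 1) * norm c"
      by (simp add: algebra_simps)
    also have "\<dots> \<le> \<eta>"
      using elim \<open>N \<ge> 0\<close> one_le_L by (simp add: pos_less_divide_eq mult.commute less_imp_le add_nonneg_pos)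
    finally have "expfam_offset (A c) (\<kappa> c) (\<zeta> c) (a c) * L \<le> \<eta>" .
    moreover have "C * (expfam_offset (A c) (\<kappa> c) (\<zeta> c) (a c))\<^sup>2 \<le> C * N\<^sup>2 * (norm c)\<^sup>2"
      using elim \<open>C \<ge> 0\<close> power_mono[of _ "N * norm c" 2]
      by (simp add: expfam_offset_def sum_nonneg mult_left_mono power_mult_distrib mult.assoc)
    ultimately show ?case
      using abs_exp_mult_expfam_minus_expfam_lin_le[OF \<eta> elim(1)] by (fold C_def) (meson order_trans)
  qed
qed

end

lemma bounded_orthonormal_system_if_combinations_bounded_below:
  fixes K :: "'i::finite \<Rightarrow> real \<Rightarrow> real"
  assumes "\<And>i. K i \<in> borel_measurable borel"
    and "\<exists>\<epsilon>>0. \<forall>x. \<forall>h::real^'i. h \<bullet> h < \<epsilon> \<longrightarrow> (\<Sum>i\<in>UNIV. h $ i * K i x) \<ge> - 1/2"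
    and "\<And>i j. (LINT x|lborel. K i x * K j x * std_normal_density x) = (if i = j then 1 else 0)"
    and "\<And>i k. k \<le> 2 \<Longrightarrow> (LINT x|lborel. K i x * x ^ k * std_normal_density x) = 0"
  obtains L where "bounded_orthonormal_system K L"
proof -
  obtain \<epsilon> where "\<epsilon> > 0" and \<epsilon>: "\<And>x (h::real^'i). h \<bullet> h < \<epsilon> \<Longrightarrow> (\<Sum>i\<in>UNIV. h $ i * K i x) \<ge> - 1/2"
    using assms(2) by blast
  have "bounded_orthonormal_system K (max 1 (1 / sqrt \<epsilon>))"
  proof
    show "\<bar>K i x\<bar> \<le> max 1 (1 / sqrt \<epsilon>)" for i x
      using abs_component_le_of_combinations_bounded_below[of \<epsilon> K x i, OF \<open>\<epsilon> > 0\<close> \<epsilon>]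
      by (simp add: le_max_iff_disj)
  qed (simp_all add: assms(1,3,4))
  then show ?thesis
    by (rule that)
qed

theorem theorem1:
  fixes G :: "'i::finite \<Rightarrow> real \<Rightarrow> real"
    and \<alpha> \<beta> \<gamma> \<delta>c :: "'i \<Rightarrow> real"
    and K :: "'i \<Rightarrow> real \<Rightarrow> real"
    and A \<kappa> \<zeta> :: "real^'i \<Rightarrow> real"
    and a :: "real^'i \<Rightarrow> real^'i"
    and U :: "(real^'i) set"
    and D :: "real^'i \<Rightarrow> ((real^'i) \<Rightarrow>\<^sub>L (real \<times> real \<times> real \<times> (real^'i)))"
  assumes G_meas: "\<And>i. G i \<in> borel_measurable borel"
    and G_growth: "\<And>i. \<exists>B>0. \<forall>x. \<bar>G i x\<bar> \<le> B * (1 + x\<^sup>2)"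
    and K_def: "\<And>i x. K i x = (G i x + \<alpha> i * x\<^sup>2 + \<beta> i * x + \<gamma> i) / \<delta>c i"
    and K_orthonormal: "\<And>i j. (LINT x|lborel. K i x * K j x * std_normal_density x)
                               = (if i = j then 1 else 0)"
    and K_orth_poly: "\<And>i k. k \<le> 2 \<Longrightarrow> (LINT x|lborel. K i x * x ^ k * std_normal_density x) = 0"
    and B1: "\<exists>\<epsilon>>0. \<forall>x. \<forall>h::real^'i. h \<bullet> h < \<epsilon> \<longrightarrow> (\<Sum>i\<in>UNIV. h $ i * K i x) \<ge> - 1/2"
    and B2: "\<exists>M::real \<Rightarrow> real.
               (\<forall>x. (\<Sum>i\<in>UNIV. \<Sum>j\<in>UNIV. \<Sum>k\<in>UNIV. \<bar>K i x * K j x * K k x\<bar>) \<le> M x)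
             \<and> (\<integral>\<^sup>+ x. ennreal (std_normal_density x * M x) \<partial>lborel) < \<infinity>"
    and U_open: "open U" and U0: "0 \<in> U"
    and deriv: "\<And>c. c \<in> U \<Longrightarrow>
                  ((\<lambda>c. (A c, \<kappa> c, \<zeta> c, a c)) has_derivative blinfun_apply (D c)) (at c)"
    and deriv_cont: "continuous_on U D"
    and lim0: "((\<lambda>c. (A c, \<kappa> c, \<zeta> c, a c)) \<longlongrightarrow> (1 / sqrt (2 * pi), 0, - 1/2, 0)) (at 0)"
    and dens_nonneg: "\<And>c x. c \<in> U \<Longrightarrow> expfam (A c) (\<kappa> c) (\<zeta> c) (a c) K x \<ge> 0"
    and dens_int: "\<And>c. c \<in> U \<Longrightarrow> integrable lborel (expfam (A c) (\<kappa> c) (\<zeta> c) (a c) K)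
                      \<and> (LINT x|lborel. expfam (A c) (\<kappa> c) (\<zeta> c) (a c) K x) = 1"
    and mean0: "\<And>c. c \<in> U \<Longrightarrow> integrable lborel (\<lambda>x. x * expfam (A c) (\<kappa> c) (\<zeta> c) (a c) K x)
                      \<and> (LINT x|lborel. x * expfam (A c) (\<kappa> c) (\<zeta> c) (a c) K x) = 0"
    and var1: "\<And>c. c \<in> U \<Longrightarrow> integrable lborel (\<lambda>x. x\<^sup>2 * expfam (A c) (\<kappa> c) (\<zeta> c) (a c) K x)
                      \<and> (LINT x|lborel. x\<^sup>2 * expfam (A c) (\<kappa> c) (\<zeta> c) (a c) K x) = 1"
    and moments: "\<And>c i. c \<in> U \<Longrightarrow>
                      integrable lborel (\<lambda>x. expfam (A c) (\<kappa> c) (\<zeta> c) (a c) K x * K i x)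
                      \<and> (LINT x|lborel. expfam (A c) (\<kappa> c) (\<zeta> c) (a c) K x * K i x) = c $ i"
  shows "\<forall>\<delta>::real. \<delta> < 1/2 \<longrightarrow>
           (\<exists>C. \<forall>\<^sub>F c in at 0. \<forall>x.
              \<bar>exp (\<delta> * x\<^sup>2) * (expfam (A c) (\<kappa> c) (\<zeta> c) (a c) K x - expfam_lin c K x)\<bar>
                \<le> C * (norm c)\<^sup>2)"
proof (intro allI impI)
  fix \<delta> :: real
  assume "\<delta> < 1/2"
  have "K i \<in> borel_measurable borel" for i
    using G_meas[of i] unfolding K_def[abs_def] by measurable
  then obtain L where "bounded_orthonormal_system K L"
    using B1 K_orthonormal K_orth_poly by (rule bounded_orthonormal_system_if_combinations_bounded_below)
  then interpret bounded_orthonormal_system K L .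
  obtain N where "N \<ge> 0" and "\<forall>\<^sub>F c in at 0. expfam_offset (A c) (\<kappa> c) (\<zeta> c) (a c) \<le> N * norm c"
    using eventually_expfam_offset_le[OF deriv[OF U0] lim0] .
  moreover have "\<forall>\<^sub>F c in at 0. moment_matched (expfam (A c) (\<kappa> c) (\<zeta> c) (a c) K) K c"
    using eventually_at_in_open'[OF U_open U0]
    by eventually_elim (simp add: moment_matched_def has_bochner_integral_iff dens_int mean0 var1 moments)
  ultimately show "\<exists>C. \<forall>\<^sub>F c in at 0. \<forall>x.
      \<bar>exp (\<delta> * x\<^sup>2) * (expfam (A c) (\<kappa> c) (\<zeta> c) (a c) K x - expfam_lin c K x)\<bar> \<le> C * (norm c)\<^sup>2"
    by (intro eventually_abs_exp_mult_expfam_minus_expfam_lin_le[OF \<open>\<delta> < 1/2\<close>])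
qed

end
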